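(* Let $\mathcal{T}=\{0,1\}$, let $P\in\Delta_{\mathcal{T},\mathcal{X},\mathcal{Y}}$ with $P(T=0)>0$ and $P(T=1)>0$, and for $t\in\{0,1\}$ write $\bar t=1-t$. Then: (1) If $\mathcal{X}_0\cap\mathcal{X}_1=\emptyset$, then $T$ is conditionally independent of $Y$ given $X$ under every $Q\in\Delta_P$. (2) If $\mathcal{Y}_0\cap\mathcal{Y}_1=\emptyset$, then $T$ is conditionally independent of $X$ given $Y$ under every $Q\in\Delta_P$. (3) Suppose $\mathcal{X}_0\cap\mathcal{X}_1\neq\emptyset\neq\mathcal{Y}_0\cap\mathcal{Y}_1$. (a) If some $t\in\{0,1\}$ satisfies $\mathcal{X}_t\setminus\mathcal{X}_{\bar t}\ne\emptyset$ and $\mathcal{Y}_t\setminus\mathcal{Y}_{\bar t}\neq\emptyset$, then $\arg\max_{Q\in\Delta_P}H_Q(T\mid X,Y)$ does not intersect the relative interior of $\Delta_P$. (b) If $\mathcal{X}_t\setminus\mathcal{X}_{\bar t}\ne\emptyset$ for some $t$ and there exists $Q^*$ in the relative interior of $\Delta_P$ with $Q^*\in\arg\max_{Q\in\Delta_P}H_Q(T\mid X,Y)$, then under the conditional distribution $Q^*(\cdot\mid Y\in\mathcal{Y}_t)$, $T$ is conditionally independent of $Y$ given $X$. (c) If $\mathcal{Y}_t\setminus\mathcal{Y}_{\bar t}\ne\emptyset$ for some $t$ and there exists $Q^*$ in the relative interior of $\Delta_P$ with $Q^*\in\arg\max_{Q\in\Delta_P}H_Q(T\mid X,Y)$, then under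 the conditional distribution $Q^*(\cdot\mid X\in\mathcal{X}_t)$, $T$ is conditionally independent of $X$ given $Y$.
   Context: $T,X,Y$ are random variables with finite state spaces $\mathcal{T},\mathcal{X},\mathcal{Y}$; $\Delta_{\mathcal{T},\mathcal{X},\mathcal{Y}}$ is the set of all joint distributions on $\mathcal{T}\times\mathcal{X}\times\mathcal{Y}$. For $P\in\Delta_{\mathcal{T},\mathcal{X},\mathcal{Y}}$, $\Delta_P=\{Q\in\Delta_{\mathcal{T},\mathcal{X},\mathcal{Y}}: Q(X=x,T=t)=P(X=x,T=t),\ Q(Y=y,T=t)=P(Y=y,T=t)\ \forall x,y,t\}$. For $t$ with $P(T=t)>0$: $\mathcal{X}_t=\{x: P(X=x\mid T=t)>0\}$, $\mathcal{Y}_t=\{y: P(Y=y\mid T=t)>0\}$. *)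

theory Defs
  imports "HOL-Analysis.Analysis"
begin

text \<open>The state space of T is {0,1}, encoded by bool (False = 0, True = 1).\<close>

type_synonym ('x,'y) jdist = "real ^ (bool \<times> 'x \<times> 'y)"

definition pr :: "('x::finite,'y::finite) jdist \<Rightarrow> bool \<Rightarrow> 'x \<Rightarrow> 'y \<Rightarrow> real" where
  "pr Q t x y = Q $ (t, x, y)"

definition is_dist :: "('x::finite,'y::finite) jdist \<Rightarrow> bool" where
  "is_dist Q \<longleftrightarrow> (\<forall>t x y. pr Q t x y \<ge> 0) \<and> (\<Sum>t\<in>UNIV. \<Sum>x\<in>UNIV. \<Sum>y\<in>UNIV. pr Q t x y) = 1"

definition pT :: "('x::finite,'y::finite) jdist \<Rightarrow> bool \<Rightarrow> real" where
  "pT Q t = (\<Sum>x\<in>UNIV. \<Sum>y\<in>UNIV. pr Q t x y)"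
definition pX :: "('x::finite,'y::finite) jdist \<Rightarrow> 'x \<Rightarrow> real" where
  "pX Q x = (\<Sum>t\<in>UNIV. \<Sum>y\<in>UNIV. pr Q t x y)"
definition pY :: "('x::finite,'y::finite) jdist \<Rightarrow> 'y \<Rightarrow> real" where
  "pY Q y = (\<Sum>t\<in>UNIV. \<Sum>x\<in>UNIV. pr Q t x y)"
definition pTX :: "('x::finite,'y::finite) jdist \<Rightarrow> bool \<Rightarrow> 'x \<Rightarrow> real" where
  "pTX Q t x = (\<Sum>y\<in>UNIV. pr Q t x y)"
definition pTY :: "('x::finite,'y::finite) jdist \<Rightarrow> bool \<Rightarrow> 'y \<Rightarrow> real" where
  "pTY Q t y = (\<Sum>x\<in>UNIV. pr Q t x y)"
definition pXY :: "('x::finite,'y::finite) jdist \<Rightarrow> 'x \<Rightarrow> 'y \<Rightarrow> real" where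
  "pXY Q x y = (\<Sum>t\<in>UNIV. pr Q t x y)"

definition DeltaP :: "('x::finite,'y::finite) jdist \<Rightarrow> ('x,'y) jdist set" where
  "DeltaP P = {Q. is_dist Q \<and> (\<forall>x t. pTX Q t x = pTX P t x) \<and> (\<forall>y t. pTY Q t y = pTY P t y)}"

definition Xsupp :: "('x::finite,'y::finite) jdist \<Rightarrow> bool \<Rightarrow> 'x set" where
  "Xsupp P t = {x. pTX P t x / pT P t > 0}"
definition Ysupp :: "('x::finite,'y::finite) jdist \<Rightarrow> bool \<Rightarrow> 'y set" where
  "Ysupp P t = {y. pTY P t y / pT P t > 0}"

text \<open>Conditional independence (of a possibly unnormalised nonnegative measure, here
 always a probability distribution): T \<perp> Y | X iff Q(t,x,y) Q(x) = Q(t,x) Q(x,y) for all t,x,y,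
 i.e. Q(t,y|x) = Q(t|x) Q(y|x) whenever Q(x) > 0.\<close>
definition indep_TY_given_X :: "('x::finite,'y::finite) jdist \<Rightarrow> bool" where
  "indep_TY_given_X Q \<longleftrightarrow> (\<forall>t x y. pr Q t x y * pX Q x = pTX Q t x * pXY Q x y)"
definition indep_TX_given_Y :: "('x::finite,'y::finite) jdist \<Rightarrow> bool" where
  "indep_TX_given_Y Q \<longleftrightarrow> (\<forall>t x y. pr Q t x y * pY Q y = pTY Q t y * pXY Q x y)"

definition cond_Y :: "('x::finite,'y::finite) jdist \<Rightarrow> 'y set \<Rightarrow> ('x,'y) jdist" where
  "cond_Y Q B = (\<chi> i. case i of (t,x,y) \<Rightarrow> (if y \<in> B then pr Q t x y else 0) / (\<Sum>y'\<in>B. pY Q y'))"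
definition cond_X :: "('x::finite,'y::finite) jdist \<Rightarrow> 'x set \<Rightarrow> ('x,'y) jdist" where
  "cond_X Q A = (\<chi> i. case i of (t,x,y) \<Rightarrow> (if x \<in> A then pr Q t x y else 0) / (\<Sum>x'\<in>A. pX Q x'))"

text \<open>Conditional entropy H_Q(T | X,Y) = - \<Sum> Q(t,x,y) log (Q(t,x,y)/Q(x,y)), with 0 log 0 = 0
 (base 2; the base is irrelevant for the argmax).\<close>
definition condH :: "('x::finite,'y::finite) jdist \<Rightarrow> real" where
  "condH Q = - (\<Sum>t\<in>UNIV. \<Sum>x\<in>UNIV. \<Sum>y\<in>UNIV.
      (if pr Q t x y > 0 then pr Q t x y * log 2 (pr Q t x y / pXY Q x y) else 0))"

definition argmaxH :: "('x::finite,'y::finite) jdist \<Rightarrow> ('x,'y) jdist set" where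
  "argmaxH P = {Q \<in> DeltaP P. \<forall>Q'\<in>DeltaP P. condH Q' \<le> condH Q}"

end

theory Submission imports Defs begin

(* A point Q of the relative interior of Delta_P charges every cell (t,x,y) with x in X_t and
   y in Y_t, because Delta_P contains a point that does (the coupling P(t) P(x|t) P(y|t)).
   Moving mass along e(t,x,y) - e(t,x,y') - e(t,x',y) + e(t,x',y') preserves both marginals, so
   at a maximiser in the relative interior the derivative of H(T|X,Y) along it vanishes:
   L(x,y) = log Q(t|x,y) satisfies L(x,y) + L(x',y') = L(x,y') + L(x',y) on X_t x Y_t.
   A point x' in X_t - X_(not t) has L(x',-) = 0, so L(x,-) is constant on Y_t, which is (3b).
   If moreover y' in Y_t - Y_(not t), a point (x,y) common to all four supports gets L(x,y) = 0,
   contradicting Q(not t,x,y) > 0; this is (3a).  Parts (1) and (2) hold because on the support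
   of any Q in Delta_P the variable T is determined by X (resp. Y). *)

lemma sum_UNIV_bool: "(\<Sum>t\<in>UNIV. f t) = f b + f (\<not> b)" for f :: "bool \<Rightarrow> 'a::comm_monoid_add"
  by (cases b) (simp_all add: UNIV_bool add.commute)

lemma pr_add [simp]: "pr (A + B) t x y = pr A t x y + pr B t x y"
  by (simp add: pr_def)

lemma pr_scaleR [simp]: "pr (c *\<^sub>R A) t x y = c * pr A t x y"
  by (simp add: pr_def)

lemma pr_chi [simp]: "pr (\<chi> i. f i) t x y = f (t, x, y)"
  by (simp add: pr_def)

lemma pTX_add [simp]: "pTX (A + B) t x = pTX A t x + pTX B t x"
  by (simp add: pTX_def sum.distrib)

lemma pTX_scaleR [simp]: "pTX (c *\<^sub>R A) t x = c * pTX A t x"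
  by (simp add: pTX_def sum_distrib_left)

lemma pTY_add [simp]: "pTY (A + B) t y = pTY A t y + pTY B t y"
  by (simp add: pTY_def sum.distrib)

lemma pTY_scaleR [simp]: "pTY (c *\<^sub>R A) t y = c * pTY A t y"
  by (simp add: pTY_def sum_distrib_left)

lemma pXY_eq: "pXY Q x y = pr Q t x y + pr Q (\<not> t) x y"
  by (simp add: pXY_def sum_UNIV_bool[where b=t])

lemma pX_eq_sum_pXY: "pX Q x = (\<Sum>y\<in>UNIV. pXY Q x y)"
  unfolding pX_def pXY_def by (rule sum.swap)

lemma pY_eq_sum_pXY: "pY Q y = (\<Sum>x\<in>UNIV. pXY Q x y)"
  unfolding pY_def pXY_def by (rule sum.swap)

lemma sum_pTX_eq_pT: "(\<Sum>x\<in>UNIV. pTX Q t x) = pT Q t"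
  by (simp add: pTX_def pT_def)

lemma sum_pTY_eq_pT: "(\<Sum>y\<in>UNIV. pTY Q t y) = pT Q t"
  unfolding pTY_def pT_def by (rule sum.swap)

lemma is_dist_iff_pTX:
  "is_dist Q \<longleftrightarrow> (\<forall>t x y. pr Q t x y \<ge> 0) \<and> (\<Sum>t\<in>UNIV. \<Sum>x\<in>UNIV. pTX Q t x) = 1"
  by (simp add: is_dist_def pTX_def)

lemma is_dist_pr_nonneg: "is_dist Q \<Longrightarrow> pr Q t x y \<ge> 0"
  by (simp add: is_dist_def)

lemma pTX_nonneg: "is_dist Q \<Longrightarrow> pTX Q t x \<ge> 0"
  by (auto simp: pTX_def intro: sum_nonneg is_dist_pr_nonneg)

lemma pTY_nonneg: "is_dist Q \<Longrightarrow> pTY Q t y \<ge> 0"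
  by (auto simp: pTY_def intro: sum_nonneg is_dist_pr_nonneg)

lemma DeltaP_is_dist: "Q \<in> DeltaP P \<Longrightarrow> is_dist Q"
  by (simp add: DeltaP_def)

lemma convex_DeltaP: "convex (DeltaP P)"
  unfolding convex_def
proof (intro ballI allI impI)
  fix A B and u v :: real
  assume A: "A \<in> DeltaP P" and B: "B \<in> DeltaP P" and uv: "0 \<le> u" "0 \<le> v" "u + v = 1"
  have dA: "is_dist A" and dB: "is_dist B" using A B by (auto simp: DeltaP_def)
  have "(\<Sum>t\<in>UNIV. \<Sum>x\<in>UNIV. pTX (u *\<^sub>R A + v *\<^sub>R B) t x)
      = u * (\<Sum>t\<in>UNIV. \<Sum>x\<in>UNIV. pTX A t x) + v * (\<Sum>t\<in>UNIV. \<Sum>x\<in>UNIV. pTX B t x)"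
    by (simp add: sum.distrib sum_distrib_left)
  then have "is_dist (u *\<^sub>R A + v *\<^sub>R B)"
    using dA dB uv by (simp add: is_dist_iff_pTX)
  moreover have "pTX (u *\<^sub>R A + v *\<^sub>R B) t x = pTX P t x" "pTY (u *\<^sub>R A + v *\<^sub>R B) t y = pTY P t y"
    for t x y using A B uv by (simp_all add: DeltaP_def flip: distrib_right)
  ultimately show "u *\<^sub>R A + v *\<^sub>R B \<in> DeltaP P"
    by (simp add: DeltaP_def)
qed

lemma pr_eq_0_if_notin_Xsupp:
  assumes "is_dist P" "pT P t > 0" "Q \<in> DeltaP P" "x \<notin> Xsupp P t"
  shows "pr Q t x y = 0"
proof -
  have "pTX P t x = 0"
    using assms pTX_nonneg[of P t x] by (auto simp: Xsupp_def zero_less_divide_iff)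
  then have "(\<Sum>y\<in>UNIV. pr Q t x y) = 0"
    using assms(3) by (simp add: DeltaP_def pTX_def)
  then show ?thesis
    using is_dist_pr_nonneg[OF DeltaP_is_dist[OF assms(3)]] by (simp add: sum_nonneg_eq_0_iff)
qed

lemma pr_eq_0_if_notin_Ysupp:
  assumes "is_dist P" "pT P t > 0" "Q \<in> DeltaP P" "y \<notin> Ysupp P t"
  shows "pr Q t x y = 0"
proof -
  have "pTY P t y = 0"
    using assms pTY_nonneg[of P t y] by (auto simp: Ysupp_def zero_less_divide_iff)
  then have "(\<Sum>x\<in>UNIV. pr Q t x y) = 0"
    using assms(3) by (simp add: DeltaP_def pTY_def)
  then show ?thesis
    using is_dist_pr_nonneg[OF DeltaP_is_dist[OF assms(3)]] by (simp add: sum_nonneg_eq_0_iff)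
qed

definition indep_coupling :: "('x::finite,'y::finite) jdist \<Rightarrow> ('x,'y) jdist" where
  "indep_coupling P = (\<chi> i. case i of (t,x,y) \<Rightarrow> pTX P t x * pTY P t y / pT P t)"

lemma indep_coupling_in_DeltaP:
  assumes "is_dist P" "\<And>t. pT P t > 0"
  shows "indep_coupling P \<in> DeltaP P"
proof -
  have X: "pTX (indep_coupling P) t x = pTX P t x" for t x
  proof -
    have "pTX (indep_coupling P) t x = pTX P t x * (\<Sum>y\<in>UNIV. pTY P t y) / pT P t"
      by (simp add: pTX_def indep_coupling_def sum_distrib_left sum_divide_distrib)
    then show ?thesis using assms(2)[of t] by (simp add: sum_pTY_eq_pT)
  qed
  have Y: "pTY (indep_coupling P) t y = pTY P t y" for t y
  proof -
    have "pTY (indep_coupling P) t y = (\<Sum>x\<in>UNIV. pTX P t x) * pTY P t y / pT P t"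
      by (simp add: pTY_def indep_coupling_def sum_distrib_right sum_divide_distrib)
    then show ?thesis using assms(2)[of t] by (simp add: sum_pTX_eq_pT)
  qed
  have "pr (indep_coupling P) t x y \<ge> 0" for t x y
    using assms by (simp add: indep_coupling_def pTX_nonneg pTY_nonneg less_imp_le)
  then have "is_dist (indep_coupling P)"
    using assms(1) by (simp add: is_dist_iff_pTX X)
  then show ?thesis using X Y by (simp add: DeltaP_def)
qed

lemma pr_indep_coupling_pos:
  assumes "pT P t > 0" "x \<in> Xsupp P t" "y \<in> Ysupp P t"
  shows "pr (indep_coupling P) t x y > 0"
  using assms by (simp add: indep_coupling_def Xsupp_def Ysupp_def zero_less_divide_iff)

lemma rel_interior_DeltaP_pr_pos:
  assumes "is_dist P" "\<And>t. pT P t > 0"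
    and "Q \<in> rel_interior (DeltaP P)" "x \<in> Xsupp P t" "y \<in> Ysupp P t"
  shows "pr Q t x y > 0"
proof -
  let ?R = "indep_coupling P"
  have R: "?R \<in> DeltaP P"
    using assms(1,2) by (rule indep_coupling_in_DeltaP)
  have r: "pr ?R t x y > 0"
    using assms(2,4,5) by (rule pr_indep_coupling_pos)
  obtain e where e: "e > 1" "(1 - e) *\<^sub>R ?R + e *\<^sub>R Q \<in> DeltaP P"
    using convex_rel_interior_iff[OF convex_DeltaP] assms(3) R by blast
  then have "(1 - e) * pr ?R t x y + e * pr Q t x y \<ge> 0"
    using is_dist_pr_nonneg[OF DeltaP_is_dist] by fastforce
  moreover have "(1 - e) * pr ?R t x y < 0" using e(1) r by (simp add: mult_neg_pos)
  ultimately show ?thesis using e(1) by (smt (verit) zero_less_mult_iff)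
qed

definition xlog_ratio :: "real \<Rightarrow> real \<Rightarrow> real" where
  "xlog_ratio a c = (if a > 0 then a * log 2 (a / c) else 0)"

definition neg_entropy2 :: "real \<Rightarrow> real \<Rightarrow> real" where
  "neg_entropy2 u v = xlog_ratio u (u + v) + xlog_ratio v (u + v)"

lemma condH_eq_sum_neg_entropy2:
  "condH Q = - (\<Sum>x\<in>UNIV. \<Sum>y\<in>UNIV. neg_entropy2 (pr Q t x y) (pr Q (\<not> t) x y))"
  unfolding condH_def neg_entropy2_def xlog_ratio_def pXY_eq[where t=t]
  by (simp add: sum_UNIV_bool[where b=t] sum.distrib)

lemma neg_entropy2_right_0: "u > 0 \<Longrightarrow> neg_entropy2 u 0 = 0"
  by (simp add: neg_entropy2_def xlog_ratio_def)

lemma neg_entropy2_eq_ln: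
  assumes "u > 0" "v > 0"
  shows "neg_entropy2 u v = (u * (ln u - ln (u + v)) + v * (ln v - ln (u + v))) / ln 2"
  using assms by (simp add: neg_entropy2_def xlog_ratio_def log_def ln_div add_divide_distrib)

lemma has_real_derivative_neg_entropy2:
  assumes "c = 0 \<or> q > 0" "s \<ge> 0"
  shows "((\<lambda>e. neg_entropy2 (q + e * c) s) has_real_derivative c * log 2 (q / (q + s))) (at 0)"
proof (cases "c = 0")
  case False
  then have q: "q > 0" using assms by auto
  define d where "d = q / \<bar>c\<bar>"
  have d: "d > 0" using q False by (simp add: d_def)
  have pos: "q + e * c > 0" if "dist e 0 < d" for e
  proof -
    have "\<bar>e * c\<bar> < q" using that False by (simp add: d_def pos_less_divide_eq abs_mult)
    then show ?thesis by linarith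
  qed
  show ?thesis
  proof (cases "s = 0")
    case True
    have "((\<lambda>e. 0) has_real_derivative c * log 2 (q / (q + s))) (at 0)"
      using True q by simp
    then show ?thesis
      by (rule has_field_derivative_transform_within[OF _ d])
         (use pos True in \<open>auto simp: neg_entropy2_right_0\<close>)
  next
    case False
    then have s: "s > 0" using assms by simp
    define F where "F e = ((q + e * c) * (ln (q + e * c) - ln (q + e * c + s))
        + s * (ln s - ln (q + e * c + s))) / ln 2" for e
    have "(F has_real_derivative
        (c * (ln q - ln (q + s)) + (c / q - c / (q + s)) * q - c * s / (q + s)) / ln 2) (at 0)"
      unfolding F_def using q s by (auto intro!: derivative_eq_intros)
    moreover have "(c / q - c / (q + s)) * q = c * s / (q + s)"
    proof -
      have "q * q + q * s > 0" using q s by (simp add: add_pos_pos)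
      then show ?thesis using q s by (simp add: field_split_simps)
    qed
    ultimately have "(F has_real_derivative c * log 2 (q / (q + s))) (at 0)"
      using q s by (simp add: log_def ln_div)
    then show ?thesis
    proof (rule has_field_derivative_transform_within[OF _ d])
      fix e :: real assume "dist e 0 < d"
      then show "F e = neg_entropy2 (q + e * c) s"
        using pos s by (simp add: F_def neg_entropy2_eq_ln add.commute add.left_commute)
    qed simp
  qed
qed simp

definition log_cond_T :: "('x::finite,'y::finite) jdist \<Rightarrow> bool \<Rightarrow> 'x \<Rightarrow> 'y \<Rightarrow> real" where
  "log_cond_T Q t x y = log 2 (pr Q t x y / pXY Q x y)"

definition rect_dir :: "bool \<Rightarrow> 'x \<Rightarrow> 'x \<Rightarrow> 'y \<Rightarrow> 'y \<Rightarrow> ('x::finite,'y::finite) jdist" where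
  "rect_dir t x x' y y' = (\<chi> i. case i of (s,a,b) \<Rightarrow>
     if s = t then (of_bool (a = x) - of_bool (a = x')) * (of_bool (b = y) - of_bool (b = y')) else 0)"

lemma pr_rect_dir:
  "pr (rect_dir t x x' y y') s a b =
     (if s = t then (of_bool (a = x) - of_bool (a = x')) * (of_bool (b = y) - of_bool (b = y')) else 0)"
  by (simp add: rect_dir_def)

lemma sum_of_bool_diff_mult:
  "(\<Sum>b\<in>UNIV. (of_bool (b = y) - of_bool (b = y')) * f b) = f y - f y'" for f :: "'a::finite \<Rightarrow> real"
  by (simp add: left_diff_distrib sum_subtractf)

lemma pTX_rect_dir [simp]: "pTX (rect_dir t x x' y y') s a = 0"
  by (cases "s = t") (auto simp: pTX_def pr_rect_dir sum_subtractf)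

lemma pTY_rect_dir [simp]: "pTY (rect_dir t x x' y y') s b = 0"
  by (cases "s = t") (auto simp: pTY_def pr_rect_dir sum_subtractf)

lemma DeltaP_add_rect_dir:
  assumes Q: "Q \<in> DeltaP P"
    and pos: "pr Q t x y > 0" "pr Q t x y' > 0" "pr Q t x' y > 0" "pr Q t x' y' > 0"
  shows "\<exists>\<delta>>0. \<forall>e. \<bar>e\<bar> < \<delta> \<longrightarrow> Q + e *\<^sub>R rect_dir t x x' y y' \<in> DeltaP P"
proof (intro exI conjI allI impI)
  let ?D = "rect_dir t x x' y y'"
  define \<delta> where "\<delta> = min (min (pr Q t x y) (pr Q t x y')) (min (pr Q t x' y) (pr Q t x' y'))"
  show "\<delta> > 0" using pos by (simp add: \<delta>_def)
  fix e :: real assume e: "\<bar>e\<bar> < \<delta>"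
  have "pr Q s a b + e * pr ?D s a b \<ge> 0" for s a b
  proof (cases "pr ?D s a b = 0")
    case False
    then have "s = t" "a = x \<or> a = x'" "b = y \<or> b = y'" and "\<bar>pr ?D s a b\<bar> \<le> 1"
      by (auto simp: pr_rect_dir split: if_splits)
    then have "pr Q s a b \<ge> \<delta>" "\<bar>e * pr ?D s a b\<bar> \<le> \<bar>e\<bar>"
      by (auto simp: \<delta>_def abs_mult mult_left_le)
    then show ?thesis using e by linarith
  qed (use Q in \<open>simp add: is_dist_pr_nonneg DeltaP_is_dist\<close>)
  then have "is_dist (Q + e *\<^sub>R ?D)"
    using DeltaP_is_dist[OF Q] by (simp add: is_dist_iff_pTX)
  then show "Q + e *\<^sub>R ?D \<in> DeltaP P"
    using Q by (simp add: DeltaP_def)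
qed

lemma has_real_derivative_condH_rect_dir:
  assumes Q: "is_dist Q"
    and pos: "pr Q t x y > 0" "pr Q t x y' > 0" "pr Q t x' y > 0" "pr Q t x' y' > 0"
  shows "((\<lambda>e. condH (Q + e *\<^sub>R rect_dir t x x' y y')) has_real_derivative
      - (log_cond_T Q t x y - log_cond_T Q t x y' - log_cond_T Q t x' y + log_cond_T Q t x' y')) (at 0)"
proof -
  define w where "w a b = pr (rect_dir t x x' y y') t a b" for a b
  have condH_eq: "(\<lambda>e. condH (Q + e *\<^sub>R rect_dir t x x' y y'))
      = (\<lambda>e. - (\<Sum>a\<in>UNIV. \<Sum>b\<in>UNIV. neg_entropy2 (pr Q t a b + e * w a b) (pr Q (\<not> t) a b)))"
    by (rule ext) (simp add: condH_eq_sum_neg_entropy2[where t=t] w_def pr_rect_dir)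
  have "((\<lambda>e. neg_entropy2 (pr Q t a b + e * w a b) (pr Q (\<not> t) a b)) has_real_derivative
      w a b * log_cond_T Q t a b) (at 0)" for a b
  proof -
    have "w a b = 0 \<or> pr Q t a b > 0"
      using pos by (auto simp: w_def pr_rect_dir)
    from has_real_derivative_neg_entropy2[OF this is_dist_pr_nonneg[OF Q]]
    show ?thesis by (simp add: log_cond_T_def pXY_eq[where t=t])
  qed
  then have "((\<lambda>e. condH (Q + e *\<^sub>R rect_dir t x x' y y')) has_real_derivative
      - (\<Sum>a\<in>UNIV. \<Sum>b\<in>UNIV. w a b * log_cond_T Q t a b)) (at 0)"
    unfolding condH_eq by (intro DERIV_minus DERIV_sum)
  moreover have "(\<Sum>a\<in>UNIV. \<Sum>b\<in>UNIV. w a b * log_cond_T Q t a b)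
      = log_cond_T Q t x y - log_cond_T Q t x y' - log_cond_T Q t x' y + log_cond_T Q t x' y'"
    by (simp add: w_def pr_rect_dir mult.assoc sum_of_bool_diff_mult flip: sum_distrib_left)
  ultimately show ?thesis by simp
qed

lemma argmaxH_log_cond_T_additive:
  assumes Q: "Q \<in> argmaxH P"
    and pos: "pr Q t x y > 0" "pr Q t x y' > 0" "pr Q t x' y > 0" "pr Q t x' y' > 0"
  shows "log_cond_T Q t x y + log_cond_T Q t x' y' = log_cond_T Q t x y' + log_cond_T Q t x' y"
proof -
  have QD: "Q \<in> DeltaP P" using Q by (simp add: argmaxH_def)
  obtain \<delta> where \<delta>: "\<delta> > 0" and near: "\<And>e. \<bar>e\<bar> < \<delta> \<Longrightarrow> Q + e *\<^sub>R rect_dir t x x' y y' \<in> DeltaP P"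
    using DeltaP_add_rect_dir[OF QD pos] by blast
  have "\<forall>e. \<bar>0 - e\<bar> < \<delta> \<longrightarrow> condH (Q + e *\<^sub>R rect_dir t x x' y y') \<le> condH (Q + 0 *\<^sub>R rect_dir t x x' y y')"
    using near Q by (auto simp: argmaxH_def)
  from DERIV_local_max[OF has_real_derivative_condH_rect_dir[OF DeltaP_is_dist[OF QD] pos] \<delta> this]
  show ?thesis by linarith
qed

lemma log_cond_T_eq_0: "pr Q (\<not> t) x y = 0 \<Longrightarrow> log_cond_T Q t x y = 0"
  by (cases "pr Q t x y = 0") (simp_all add: log_cond_T_def pXY_eq[where t=t] log_def)

lemma log_cond_T_neg:
  assumes "pr Q t x y > 0" "pr Q (\<not> t) x y > 0"
  shows "log_cond_T Q t x y < 0"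
proof -
  have "0 < pr Q t x y / pXY Q x y" "pr Q t x y / pXY Q x y < 1"
    using assms by (simp_all add: pXY_eq[where t=t])
  then show ?thesis by (simp add: log_cond_T_def)
qed

lemma cross_eq_if_log_cond_T_eq:
  assumes "pr Q t a b > 0" "pr Q t a' b' > 0" "pr Q (\<not> t) a b \<ge> 0" "pr Q (\<not> t) a' b' \<ge> 0"
    and "log_cond_T Q t a b = log_cond_T Q t a' b'"
  shows "pr Q t a b * pXY Q a' b' = pr Q t a' b' * pXY Q a b"
proof -
  have pXY: "pXY Q a b > 0" "pXY Q a' b' > 0"
    using assms(1-4) by (simp_all add: pXY_eq[where t=t])
  have "pr Q t a b / pXY Q a b = pr Q t a' b' / pXY Q a' b'"
    using log_inj[of 2] assms(1,2,5) pXY by (auto simp: log_cond_T_def inj_on_def)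
  then show ?thesis using pXY by (simp add: frac_eq_eq)
qed

lemma cross_eq_other_T:
  assumes "pr Q t a b * pXY Q a' b' = pr Q t a' b' * pXY Q a b"
  shows "pr Q t' a b * pXY Q a' b' = pr Q t' a' b' * pXY Q a b"
proof (cases "t' = t")
  case False
  then have "t' = (\<not> t)" by auto
  moreover have "pr Q (\<not> t) a b = pXY Q a b - pr Q t a b" "pr Q (\<not> t) a' b' = pXY Q a' b' - pr Q t a' b'"
    by (simp_all add: pXY_eq[where t=t])
  ultimately show ?thesis using assms by algebra
qed (use assms in simp)

lemma pr_cond_Y: "pr (cond_Y Q B) t a b = (if b \<in> B then pr Q t a b else 0) / (\<Sum>y\<in>B. pY Q y)"
  unfolding cond_Y_def by (simp only: pr_chi prod.case)

lemma pr_cond_X: "pr (cond_X Q A) t a b = (if a \<in> A then pr Q t a b else 0) / (\<Sum>x\<in>A. pX Q x)"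
  unfolding cond_X_def by (simp only: pr_chi prod.case)

lemma sum_UNIV_if_mem: "(\<Sum>y\<in>UNIV. (if y \<in> B then f y else 0)) = sum f B" for f :: "'a::finite \<Rightarrow> real"
  by (simp add: sum.If_cases)

lemma indep_TY_given_X_cond_Y:
  assumes "\<And>t a b b'. b \<in> B \<Longrightarrow> b' \<in> B \<Longrightarrow> pr Q t a b * pXY Q a b' = pr Q t a b' * pXY Q a b"
  shows "indep_TY_given_X (cond_Y Q B)"
  unfolding indep_TY_given_X_def
proof (intro allI)
  fix t a b
  let ?c = "\<Sum>y\<in>B. pY Q y"
  have pTX_C: "pTX (cond_Y Q B) t a = (\<Sum>y\<in>B. pr Q t a y) / ?c"
    by (simp only: pTX_def pr_cond_Y sum_divide_distrib[symmetric] sum_UNIV_if_mem)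
  have pXY_C: "pXY (cond_Y Q B) a y = (if y \<in> B then pXY Q a y else 0) / ?c" for y
    by (cases "y \<in> B") (simp_all add: pXY_def pr_cond_Y sum_divide_distrib)
  have pX_C: "pX (cond_Y Q B) a = (\<Sum>y\<in>B. pXY Q a y) / ?c"
    by (simp only: pX_eq_sum_pXY pXY_C sum_divide_distrib[symmetric] sum_UNIV_if_mem)
  show "pr (cond_Y Q B) t a b * pX (cond_Y Q B) a = pTX (cond_Y Q B) t a * pXY (cond_Y Q B) a b"
  proof (cases "b \<in> B")
    case True
    have "pr Q t a b * (\<Sum>y\<in>B. pXY Q a y) = (\<Sum>y\<in>B. pr Q t a y * pXY Q a b)"
      unfolding sum_distrib_left using assms[OF True] by (intro sum.cong) auto
    then have "pr Q t a b * (\<Sum>y\<in>B. pXY Q a y) = (\<Sum>y\<in>B. pr Q t a y) * pXY Q a b"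
      by (simp add: sum_distrib_right)
    then show ?thesis
      by (simp only: pr_cond_Y pX_C pTX_C pXY_C if_P[OF True] times_divide_times_eq)
  qed (simp add: pr_cond_Y pXY_C)
qed

lemma indep_TX_given_Y_cond_X:
  assumes "\<And>t a a' b. a \<in> A \<Longrightarrow> a' \<in> A \<Longrightarrow> pr Q t a b * pXY Q a' b = pr Q t a' b * pXY Q a b"
  shows "indep_TX_given_Y (cond_X Q A)"
  unfolding indep_TX_given_Y_def
proof (intro allI)
  fix t a b
  let ?c = "\<Sum>x\<in>A. pX Q x"
  have pTY_C: "pTY (cond_X Q A) t b = (\<Sum>x\<in>A. pr Q t x b) / ?c"
    by (simp only: pTY_def pr_cond_X sum_divide_distrib[symmetric] sum_UNIV_if_mem)
  have pXY_C: "pXY (cond_X Q A) x b = (if x \<in> A then pXY Q x b else 0) / ?c" for x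
    by (cases "x \<in> A") (simp_all add: pXY_def pr_cond_X sum_divide_distrib)
  have pY_C: "pY (cond_X Q A) b = (\<Sum>x\<in>A. pXY Q x b) / ?c"
    by (simp only: pY_eq_sum_pXY pXY_C sum_divide_distrib[symmetric] sum_UNIV_if_mem)
  show "pr (cond_X Q A) t a b * pY (cond_X Q A) b = pTY (cond_X Q A) t b * pXY (cond_X Q A) a b"
  proof (cases "a \<in> A")
    case True
    have "pr Q t a b * (\<Sum>x\<in>A. pXY Q x b) = (\<Sum>x\<in>A. pr Q t x b * pXY Q a b)"
      unfolding sum_distrib_left using assms[OF True] by (intro sum.cong) auto
    then have "pr Q t a b * (\<Sum>x\<in>A. pXY Q x b) = (\<Sum>x\<in>A. pr Q t x b) * pXY Q a b"
      by (simp add: sum_distrib_right)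
    then show ?thesis
      by (simp only: pr_cond_X pY_C pTY_C pXY_C if_P[OF True] times_divide_times_eq)
  qed (simp add: pr_cond_X pXY_C)
qed

lemma indep_TY_given_X_if_Xsupp_disjoint:
  assumes "is_dist P" "\<And>t. pT P t > 0" "Xsupp P False \<inter> Xsupp P True = {}" "Q \<in> DeltaP P"
  shows "indep_TY_given_X Q"
  unfolding indep_TY_given_X_def
proof (intro allI)
  fix t a b
  obtain s where "a \<notin> Xsupp P s" using assms(3) by blast
  then have z: "pr Q s a c = 0" for c using pr_eq_0_if_notin_Xsupp assms(1,2,4) by blast
  have "pX Q a = pTX Q (\<not> s) a" "pXY Q a b = pr Q (\<not> s) a b" "pTX Q s a = 0"
    by (simp_all add: pX_def pTX_def sum_UNIV_bool[where b="\<not> s"] pXY_eq[where t="\<not> s"] z)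
  then show "pr Q t a b * pX Q a = pTX Q t a * pXY Q a b"
    by (cases "t = s") (auto simp: z)
qed

lemma indep_TX_given_Y_if_Ysupp_disjoint:
  assumes "is_dist P" "\<And>t. pT P t > 0" "Ysupp P False \<inter> Ysupp P True = {}" "Q \<in> DeltaP P"
  shows "indep_TX_given_Y Q"
  unfolding indep_TX_given_Y_def
proof (intro allI)
  fix t a b
  obtain s where "b \<notin> Ysupp P s" using assms(3) by blast
  then have z: "pr Q s c b = 0" for c using pr_eq_0_if_notin_Ysupp assms(1,2,4) by blast
  have "pY Q b = pTY Q (\<not> s) b" "pXY Q a b = pr Q (\<not> s) a b" "pTY Q s b = 0"
    by (simp_all add: pY_def pTY_def sum_UNIV_bool[where b="\<not> s"] pXY_eq[where t="\<not> s"] z)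
  then show "pr Q t a b * pY Q b = pTY Q t b * pXY Q a b"
    by (cases "t = s") (auto simp: z)
qed

lemma argmaxH_inter_rel_interior_DeltaP_empty:
  assumes P: "is_dist P" "\<And>t. pT P t > 0"
    and "Xsupp P False \<inter> Xsupp P True \<noteq> {}" "Ysupp P False \<inter> Ysupp P True \<noteq> {}"
    and "Xsupp P t - Xsupp P (\<not> t) \<noteq> {}" "Ysupp P t - Ysupp P (\<not> t) \<noteq> {}"
  shows "argmaxH P \<inter> rel_interior (DeltaP P) = {}"
proof (intro equals0I)
  fix Q assume "Q \<in> argmaxH P \<inter> rel_interior (DeltaP P)"
  then have Q: "Q \<in> argmaxH P" "Q \<in> rel_interior (DeltaP P)" by auto
  then have QD: "Q \<in> DeltaP P" using rel_interior_subset by blast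
  obtain x1 where x1: "x1 \<in> Xsupp P t" "x1 \<in> Xsupp P (\<not> t)" using assms(3) by (cases t) auto
  obtain y1 where y1: "y1 \<in> Ysupp P t" "y1 \<in> Ysupp P (\<not> t)" using assms(4) by (cases t) auto
  obtain x0 where x0: "x0 \<in> Xsupp P t" "x0 \<notin> Xsupp P (\<not> t)" using assms(5) by blast
  obtain y0 where y0: "y0 \<in> Ysupp P t" "y0 \<notin> Ysupp P (\<not> t)" using assms(6) by blast
  note pos = rel_interior_DeltaP_pr_pos[OF P Q(2)]
  have "log_cond_T Q t x1 y1 + log_cond_T Q t x0 y0 = log_cond_T Q t x1 y0 + log_cond_T Q t x0 y1"
    using x0 x1 y0 y1 by (intro argmaxH_log_cond_T_additive[OF Q(1)] pos)
  moreover have "log_cond_T Q t x0 y = 0" "log_cond_T Q t x y0 = 0" for x y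
    using pr_eq_0_if_notin_Xsupp[OF P QD x0(2)] pr_eq_0_if_notin_Ysupp[OF P QD y0(2)]
    by (simp_all add: log_cond_T_eq_0)
  moreover have "log_cond_T Q t x1 y1 < 0"
    using x1 y1 by (intro log_cond_T_neg pos)
  ultimately show False by simp
qed

lemma indep_TY_given_X_cond_Y_Ysupp:
  assumes P: "is_dist P" "\<And>t. pT P t > 0"
    and Q: "Q \<in> argmaxH P" "Q \<in> rel_interior (DeltaP P)"
    and "Xsupp P t - Xsupp P (\<not> t) \<noteq> {}"
  shows "indep_TY_given_X (cond_Y Q (Ysupp P t))"
proof (rule indep_TY_given_X_cond_Y)
  have QD: "Q \<in> DeltaP P" using Q(2) rel_interior_subset by blast
  obtain x0 where x0: "x0 \<in> Xsupp P t" "x0 \<notin> Xsupp P (\<not> t)" using assms(5) by blast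
  note pos = rel_interior_DeltaP_pr_pos[OF P Q(2)]
  note nonneg = is_dist_pr_nonneg[OF DeltaP_is_dist[OF QD]]
  fix t' a b b' assume b: "b \<in> Ysupp P t" "b' \<in> Ysupp P t"
  have "pr Q t a b * pXY Q a b' = pr Q t a b' * pXY Q a b"
  proof (cases "a \<in> Xsupp P t")
    case True
    have "log_cond_T Q t a b + log_cond_T Q t x0 b' = log_cond_T Q t a b' + log_cond_T Q t x0 b"
      using True x0 b by (intro argmaxH_log_cond_T_additive[OF Q(1)] pos)
    moreover have "log_cond_T Q t x0 y = 0" for y
      using pr_eq_0_if_notin_Xsupp[OF P QD x0(2)] by (simp add: log_cond_T_eq_0)
    ultimately have "log_cond_T Q t a b = log_cond_T Q t a b'" by simp
    then show ?thesis
      using True b by (intro cross_eq_if_log_cond_T_eq pos nonneg)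
  qed (simp add: pr_eq_0_if_notin_Xsupp[OF P QD])
  then show "pr Q t' a b * pXY Q a b' = pr Q t' a b' * pXY Q a b"
    by (rule cross_eq_other_T)
qed

lemma indep_TX_given_Y_cond_X_Xsupp:
  assumes P: "is_dist P" "\<And>t. pT P t > 0"
    and Q: "Q \<in> argmaxH P" "Q \<in> rel_interior (DeltaP P)"
    and "Ysupp P t - Ysupp P (\<not> t) \<noteq> {}"
  shows "indep_TX_given_Y (cond_X Q (Xsupp P t))"
proof (rule indep_TX_given_Y_cond_X)
  have QD: "Q \<in> DeltaP P" using Q(2) rel_interior_subset by blast
  obtain y0 where y0: "y0 \<in> Ysupp P t" "y0 \<notin> Ysupp P (\<not> t)" using assms(5) by blast
  note pos = rel_interior_DeltaP_pr_pos[OF P Q(2)]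
  note nonneg = is_dist_pr_nonneg[OF DeltaP_is_dist[OF QD]]
  fix t' a a' b assume a: "a \<in> Xsupp P t" "a' \<in> Xsupp P t"
  have "pr Q t a b * pXY Q a' b = pr Q t a' b * pXY Q a b"
  proof (cases "b \<in> Ysupp P t")
    case True
    have "log_cond_T Q t a b + log_cond_T Q t a' y0 = log_cond_T Q t a y0 + log_cond_T Q t a' b"
      using True y0 a by (intro argmaxH_log_cond_T_additive[OF Q(1)] pos)
    moreover have "log_cond_T Q t x y0 = 0" for x
      using pr_eq_0_if_notin_Ysupp[OF P QD y0(2)] by (simp add: log_cond_T_eq_0)
    ultimately have "log_cond_T Q t a b = log_cond_T Q t a' b" by simp
    then show ?thesis
      using True a by (intro cross_eq_if_log_cond_T_eq pos nonneg)
  qed (simp add: pr_eq_0_if_notin_Ysupp[OF P QD])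
  then show "pr Q t' a b * pXY Q a' b = pr Q t' a' b * pXY Q a b"
    by (rule cross_eq_other_T)
qed

theorem mainTheorem14:
  fixes P :: "('x::finite, 'y::finite) jdist"
  assumes "is_dist P" and "pT P False > 0" and "pT P True > 0"
  shows
   "(Xsupp P False \<inter> Xsupp P True = {} \<longrightarrow> (\<forall>Q\<in>DeltaP P. indep_TY_given_X Q))
  \<and> (Ysupp P False \<inter> Ysupp P True = {} \<longrightarrow> (\<forall>Q\<in>DeltaP P. indep_TX_given_Y Q))
  \<and> (Xsupp P False \<inter> Xsupp P True \<noteq> {} \<and> Ysupp P False \<inter> Ysupp P True \<noteq> {} \<longrightarrow>
       ((\<exists>t. Xsupp P t - Xsupp P (\<not> t) \<noteq> {} \<and> Ysupp P t - Ysupp P (\<not> t) \<noteq> {}) \<longrightarrow>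
            argmaxH P \<inter> rel_interior (DeltaP P) = {})
     \<and> (\<forall>t. Xsupp P t - Xsupp P (\<not> t) \<noteq> {} \<longrightarrow>
            (\<forall>Q\<in>rel_interior (DeltaP P) \<inter> argmaxH P. indep_TY_given_X (cond_Y Q (Ysupp P t))))
     \<and> (\<forall>t. Ysupp P t - Ysupp P (\<not> t) \<noteq> {} \<longrightarrow>
            (\<forall>Q\<in>rel_interior (DeltaP P) \<inter> argmaxH P. indep_TX_given_Y (cond_X Q (Xsupp P t)))))"
proof -
  have pT: "pT P t > 0" for t using assms by (cases t) auto
  show ?thesis
    using indep_TY_given_X_if_Xsupp_disjoint[OF assms(1) pT]
      indep_TX_given_Y_if_Ysupp_disjoint[OF assms(1) pT]
      argmaxH_inter_rel_interior_DeltaP_empty[OF assms(1) pT]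
      indep_TY_given_X_cond_Y_Ysupp[OF assms(1) pT]
      indep_TX_given_Y_cond_X_Xsupp[OF assms(1) pT]
    by blast
qed

end
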